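(* Let $A=[A_1,\dots,A_n]\in\mathbb{R}^{p\times n}$ be mean-removed, i.e. $A\mathbf{1}=\mathbf{0}$, and let $\beta\doteq-\min_{i,j}(A^TA)_{ij}$. Put $\tilde A=\begin{bmatrix}\sqrt{\beta}\,\mathbf{1}^T\\ A\end{bmatrix}\in\mathbb{R}^{(p+1)\times n}$ and $W\doteq\tilde A^T\tilde A$. Let $F\in\mathbb{R}^{K\times n}$ be the class indicator matrix of the $n$ samples. If $W$ satisfies the ideal graph condition for classification, i.e. $W_{ij}=0$ for all $i,j$ with $F_i\neq F_j$, then $\sqrt{\beta n}$ is the largest singular value of $\tilde A$ and every row of $F$ lies in the span of the right singular vectors of $\tilde A$ associated with the singular value $\sqrt{\beta n}$ (in particular in the row space of $\tilde A$). Consequently zero fitting error is achieved: any minimizer $D^*$ of $\|F-D\tilde A\|_F^2$ over $D\in\mathbb{R}^{K\times(p+1)}$ satisfies $F=D^*\tilde A$.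
   Context: $\mathbf{1}$ denotes the all-ones vector. The indicator matrix $F=[F_1,\dots,F_n]$ has columns $F_i=e_k$ (the $k$th standard basis vector of $\mathbb{R}^K$) if the $i$th sample belongs to class $k$. Since $A\mathbf{1}=\mathbf{0}$ (and $A\neq 0$), $\beta>0$ and $W$ is entrywise nonnegative. Linear regression for classification (LRC) solves $\min_D\|F-D\tilde A\|_F^2$. *)

theory Defs
  imports "Jordan_Normal_Form.Char_Poly"
begin

definition beta_of :: "real mat \<Rightarrow> real" where
  "beta_of A = - Min {(transpose_mat A * A) $$ (i, j) | i j. i < dim_col A \<and> j < dim_col A}"

definition tilde_mat :: "real mat \<Rightarrow> real mat" where
  "tilde_mat A = mat (dim_row A + 1) (dim_col A)
      (\<lambda>(i, j). if i = 0 then sqrt (beta_of A) else A $$ (i - 1, j))"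

definition singular_value :: "real mat \<Rightarrow> real \<Rightarrow> bool" where
  "singular_value M s \<longleftrightarrow> s \<ge> 0 \<and> eigenvalue (transpose_mat M * M) (s ^ 2)"

definition largest_singular_value :: "real mat \<Rightarrow> real \<Rightarrow> bool" where
  "largest_singular_value M s \<longleftrightarrow> singular_value M s \<and> (\<forall>t. singular_value M t \<longrightarrow> t \<le> s)"

definition right_singular_space :: "real mat \<Rightarrow> real \<Rightarrow> real vec set" where
  "right_singular_space M s =
     {v \<in> carrier_vec (dim_col M). (transpose_mat M * M) *\<^sub>v v = (s ^ 2) \<cdot>\<^sub>v v}"

definition row_space :: "real mat \<Rightarrow> real vec set" where
  "row_space M = {transpose_mat M *\<^sub>v c | c. c \<in> carrier_vec (dim_row M)}"

definition frob_sq :: "real mat \<Rightarrow> real" where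
  "frob_sq M = (\<Sum>i<dim_row M. \<Sum>j<dim_col M. (M $$ (i, j))^2)"

end

theory Submission
  imports Defs
begin

text \<open>Adding \<open>\<beta>\<close> to every entry of the Gram matrix of the mean-removed \<open>A\<close> makes
  \<open>W\<close> entrywise nonnegative with all row sums equal to \<open>\<beta> n\<close>. For such a matrix \<open>\<beta> n\<close>
  is the largest eigenvalue: the all-ones vector attains it, and at a coordinate of
  maximal modulus of any eigenvector the eigen-equation bounds the eigenvalue by the row
  sum. Under the ideal graph condition \<open>W\<close> is block diagonal along the classes, so every
  vector constant on the classes, in particular every row of \<open>F\<close>, is an eigenvector for
  \<open>\<beta> n\<close>. An eigenvector of the Gram matrix of a matrix for a nonzero eigenvalue lies in
  that matrix's row space, so \<open>F\<close> factors through the augmented matrix and every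
  least-squares minimiser fits exactly.\<close>

lemma eigenvalue_le_row_sum:
  fixes W :: "real mat"
  assumes W: "W \<in> carrier_mat n n"
    and nonneg: "\<And>i j. i < n \<Longrightarrow> j < n \<Longrightarrow> W $$ (i, j) \<ge> 0"
    and row_sum: "\<And>i. i < n \<Longrightarrow> (\<Sum>j=0..<n. W $$ (i, j)) = s"
    and "eigenvalue W l"
  shows "l \<le> s"
proof -
  obtain v where v: "v \<in> carrier_vec n" "v \<noteq> 0\<^sub>v n" "W *\<^sub>v v = l \<cdot>\<^sub>v v"
    using assms(4) W unfolding eigenvalue_def eigenvector_def by auto
  define M where "M = Max ((\<lambda>j. \<bar>v $ j\<bar>) ` {0..<n})"
  have M_ge: "\<bar>v $ j\<bar> \<le> M" if "j < n" for j
    unfolding M_def using that by (intro Max_ge) auto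
  have "n \<noteq> 0"
  proof
    assume "n = 0"
    then have "v = 0\<^sub>v n" using v(1) by (intro eq_vecI) auto
    then show False using v(2) by simp
  qed
  then obtain i where i: "i < n" "\<bar>v $ i\<bar> = M"
    using Max_in[of "(\<lambda>j. \<bar>v $ j\<bar>) ` {0..<n}"] unfolding M_def by fastforce
  have M_pos: "M > 0"
  proof (rule ccontr)
    assume "\<not> M > 0"
    then have "v = 0\<^sub>v n" using M_ge v(1) by (intro eq_vecI) (auto, fastforce)
    then show False using v(2) by simp
  qed
  have "l * v $ i = (\<Sum>j=0..<n. W $$ (i, j) * v $ j)"
  proof -
    have "l * v $ i = (W *\<^sub>v v) $ i" using v i by simp
    also have "\<dots> = (\<Sum>j=0..<n. W $$ (i, j) * v $ j)"
      using W v(1) i by (simp add: scalar_prod_def)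
    finally show ?thesis .
  qed
  then have "\<bar>l\<bar> * M \<le> (\<Sum>j=0..<n. \<bar>W $$ (i, j) * v $ j\<bar>)"
    using i by (metis abs_mult sum_abs)
  also have "\<dots> \<le> (\<Sum>j=0..<n. W $$ (i, j) * M)"
    using nonneg[OF i(1)] M_ge by (intro sum_mono) (simp add: abs_mult mult_left_mono)
  also have "\<dots> = s * M"
    by (simp add: row_sum[OF i(1), symmetric] sum_distrib_right)
  finally show ?thesis
    using M_pos by (simp add: mult_le_cancel_right)
qed

lemma row_sum_eigenvalue:
  fixes W :: "real mat"
  assumes W: "W \<in> carrier_mat n n" and "n > 0"
    and row_sum: "\<And>i. i < n \<Longrightarrow> (\<Sum>j=0..<n. W $$ (i, j)) = s"
  shows "eigenvalue W s"
  unfolding eigenvalue_def eigenvector_def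
proof (intro exI conjI)
  show "vec n (\<lambda>_. 1 :: real) \<in> carrier_vec (dim_row W)" using W by simp
  show "vec n (\<lambda>_. 1 :: real) \<noteq> 0\<^sub>v (dim_row W)"
    using W \<open>n > 0\<close> by (auto simp: vec_eq_iff)
  show "W *\<^sub>v vec n (\<lambda>_. 1) = s \<cdot>\<^sub>v vec n (\<lambda>_. 1)"
    using W by (intro eq_vecI) (simp_all add: scalar_prod_def row_sum)
qed

lemma block_constant_mult_vec:
  fixes W :: "real mat"
  assumes W: "W \<in> carrier_mat n n" and v: "v \<in> carrier_vec n"
    and row_sum: "\<And>i. i < n \<Longrightarrow> (\<Sum>j=0..<n. W $$ (i, j)) = s"
    and blocks: "\<And>i j. i < n \<Longrightarrow> j < n \<Longrightarrow> v $ i \<noteq> v $ j \<Longrightarrow> W $$ (i, j) = 0"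
  shows "W *\<^sub>v v = s \<cdot>\<^sub>v v"
proof (rule eq_vecI)
  fix i assume "i < dim_vec (s \<cdot>\<^sub>v v)"
  then have i: "i < n" using v by simp
  have "(W *\<^sub>v v) $ i = (\<Sum>j=0..<n. W $$ (i, j) * v $ j)"
    using W v i by (simp add: scalar_prod_def)
  also have "\<dots> = (\<Sum>j=0..<n. W $$ (i, j) * v $ i)"
    by (rule sum.cong[OF refl]) (use blocks[OF i] in force)
  also have "\<dots> = s * v $ i"
    by (simp add: row_sum[OF i, symmetric] sum_distrib_right)
  finally show "(W *\<^sub>v v) $ i = (s \<cdot>\<^sub>v v) $ i" using v i by simp
qed (use W v in simp)

lemma gram_eigenvector_in_row_space:
  fixes T :: "real mat"
  assumes T: "T \<in> carrier_mat m n" and v: "v \<in> carrier_vec n"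
    and eig: "(transpose_mat T * T) *\<^sub>v v = l \<cdot>\<^sub>v v" and "l \<noteq> 0"
  shows "v \<in> row_space T"
proof -
  have "transpose_mat T *\<^sub>v ((1 / l) \<cdot>\<^sub>v (T *\<^sub>v v)) = (1 / l) \<cdot>\<^sub>v ((transpose_mat T * T) *\<^sub>v v)"
    using T v by (simp add: mult_mat_vec[of _ n m])
  also have "\<dots> = v"
    using \<open>l \<noteq> 0\<close> by (simp add: eig smult_smult_assoc)
  moreover have "(1 / l) \<cdot>\<^sub>v (T *\<^sub>v v) \<in> carrier_vec (dim_row T)"
    using T v by simp
  ultimately show ?thesis
    unfolding row_space_def by (metis (mono_tags, lifting) mem_Collect_eq)
qed

lemma factor_through_row_space:
  fixes F T :: "real mat"
  assumes F: "F \<in> carrier_mat K n" and T: "T \<in> carrier_mat m n"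
    and rows: "\<And>k. k < K \<Longrightarrow> row F k \<in> row_space T"
  shows "\<exists>D \<in> carrier_mat K m. F = D * T"
proof -
  have "\<forall>k\<in>{..<K}. \<exists>c. c \<in> carrier_vec m \<and> row F k = transpose_mat T *\<^sub>v c"
    using rows T unfolding row_space_def by auto
  then obtain c where c: "\<And>k. k < K \<Longrightarrow> c k \<in> carrier_vec m"
    and row_F: "\<And>k. k < K \<Longrightarrow> row F k = transpose_mat T *\<^sub>v c k"
    unfolding bchoice_iff by (metis lessThan_iff)
  define D where "D = mat K m (\<lambda>(k, r). c k $ r)"
  have row_D: "row D k = c k" if "k < K" for k
    using c[OF that] that unfolding D_def by (intro eq_vecI) auto
  have "F = D * T"
  proof (rule eq_matI)
    fix k j assume "k < dim_row (D * T)" "j < dim_col (D * T)"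
    then have k: "k < K" and j: "j < n" using T unfolding D_def by auto
    have "F $$ (k, j) = (transpose_mat T *\<^sub>v c k) $ j"
      using F k j by (metis carrier_matD index_row(1) row_F)
    also have "\<dots> = col T j \<bullet> c k" using T j by simp
    also have "\<dots> = row D k \<bullet> col T j"
      using c[OF k] T j by (simp add: row_D[OF k] comm_scalar_prod[of _ m])
    finally show "F $$ (k, j) = (D * T) $$ (k, j)" using k j T unfolding D_def by simp
  qed (use F T in \<open>auto simp: D_def\<close>)
  moreover have "D \<in> carrier_mat K m" unfolding D_def by simp
  ultimately show ?thesis by blast
qed

lemma frob_sq_nonneg: "frob_sq M \<ge> 0"
  unfolding frob_sq_def by (intro sum_nonneg) auto

lemma frob_sq_eq_0_imp_zero:
  assumes "M \<in> carrier_mat K n" and "frob_sq M = 0"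
  shows "M = 0\<^sub>m K n"
proof (rule eq_matI)
  fix i j assume "i < dim_row (0\<^sub>m K n :: real mat)" "j < dim_col (0\<^sub>m K n :: real mat)"
  then have ij: "i \<in> {..<K}" "j \<in> {..<n}" by auto
  have "(\<Sum>j<n. (M $$ (i, j))\<^sup>2) = 0"
    using assms ij(1) unfolding frob_sq_def
    by (subst (asm) sum_nonneg_eq_0_iff) (auto intro: sum_nonneg)
  then have "(M $$ (i, j))\<^sup>2 = 0"
    using ij(2) by (subst (asm) sum_nonneg_eq_0_iff) auto
  then show "M $$ (i, j) = 0\<^sub>m K n $$ (i, j)" using ij by simp
qed (use assms in auto)

lemma least_squares_exact_fit:
  fixes F T Ds :: "real mat"
  assumes F: "F \<in> carrier_mat K n" and T: "T \<in> carrier_mat m n"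
    and exact: "\<exists>D \<in> carrier_mat K m. F = D * T"
    and Ds: "Ds \<in> carrier_mat K m"
    and minimal: "\<forall>D \<in> carrier_mat K m. frob_sq (F - Ds * T) \<le> frob_sq (F - D * T)"
  shows "F = Ds * T"
proof -
  obtain D where D: "D \<in> carrier_mat K m" "F = D * T" using exact by blast
  have "frob_sq (F - D * T) = 0"
    unfolding D(2)[symmetric] by (simp add: frob_sq_def)
  then have "frob_sq (F - Ds * T) = 0"
    using minimal D(1) frob_sq_nonneg[of "F - Ds * T"] by fastforce
  then have "F - Ds * T = 0\<^sub>m K n"
    using F T Ds by (intro frob_sq_eq_0_imp_zero) auto
  then show ?thesis
  proof (intro eq_matI)
    fix i j assume "i < dim_row (Ds * T)" "j < dim_col (Ds * T)"
    then show "F $$ (i, j) = (Ds * T) $$ (i, j)"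
      using \<open>F - Ds * T = 0\<^sub>m K n\<close> F T Ds
      by (metis carrier_matD index_minus_mat(1) index_mult_mat(2,3) index_zero_mat(1) right_minus_eq)
  qed (use F T Ds in auto)
qed

lemma gram_entry:
  assumes "A \<in> carrier_mat p n" "i < n" "j < n"
  shows "(transpose_mat A * A) $$ (i, j) = (\<Sum>r=0..<p. A $$ (r, i) * A $$ (r, j))"
  using assms by (simp add: scalar_prod_def)

lemma row_sum_eq_mult_ones:
  fixes W :: "real mat"
  assumes "W \<in> carrier_mat m n" "i < m"
  shows "(\<Sum>j=0..<n. W $$ (i, j)) = (W *\<^sub>v vec n (\<lambda>_. 1)) $ i"
  using assms by (simp add: scalar_prod_def)

lemma gram_row_sum_eq_0:
  fixes A :: "real mat"
  assumes A: "A \<in> carrier_mat p n" and mean_removed: "A *\<^sub>v vec n (\<lambda>_. 1) = 0\<^sub>v p"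
    and i: "i < n"
  shows "(\<Sum>j=0..<n. (transpose_mat A * A) $$ (i, j)) = 0"
proof -
  have "(\<Sum>j=0..<n. (transpose_mat A * A) $$ (i, j)) = ((transpose_mat A * A) *\<^sub>v vec n (\<lambda>_. 1)) $ i"
    using A i by (intro row_sum_eq_mult_ones) auto
  also have "\<dots> = (transpose_mat A *\<^sub>v 0\<^sub>v p) $ i"
    using A by (simp flip: mean_removed)
  also have "\<dots> = 0"
    using A i by simp
  finally show ?thesis .
qed

lemma neg_beta_of_le_gram:
  assumes "i < dim_col A" "j < dim_col A"
  shows "- beta_of A \<le> (transpose_mat A * A) $$ (i, j)"
proof -
  let ?S = "{(transpose_mat A * A) $$ (i, j) | i j. i < dim_col A \<and> j < dim_col A}"
  have "finite ?S"
    by (rule finite_image_set2) auto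
  moreover have "(transpose_mat A * A) $$ (i, j) \<in> ?S"
    using assms by blast
  ultimately have "Min ?S \<le> (transpose_mat A * A) $$ (i, j)"
    by (rule Min_le)
  then show ?thesis
    unfolding beta_of_def by simp
qed

text \<open>If beta were \<open>\<le> 0\<close>, a row of the Gram matrix would be nonnegative with sum 0, so its
  diagonal entry, the squared norm of a column of A, would vanish.\<close>
lemma beta_of_pos:
  fixes A :: "real mat"
  assumes A: "A \<in> carrier_mat p n" and mean_removed: "A *\<^sub>v vec n (\<lambda>_. 1) = 0\<^sub>v p"
    and nonzero: "A \<noteq> 0\<^sub>m p n"
  shows "beta_of A > 0"
proof (rule ccontr)
  assume "\<not> beta_of A > 0"
  then have nonneg: "(transpose_mat A * A) $$ (i, j) \<ge> 0" if "i < n" "j < n" for i j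
    using neg_beta_of_le_gram[of i A j] that A by fastforce
  obtain r c where rc: "r < p" "c < n" "A $$ (r, c) \<noteq> 0"
    using nonzero A by (metis carrier_matD(1,2) eq_matI index_zero_mat(1,2,3))
  have "(transpose_mat A * A) $$ (c, c) = 0"
    using gram_row_sum_eq_0[OF A mean_removed rc(2)] nonneg rc(2)
    by (subst (asm) sum_nonneg_eq_0_iff) auto
  moreover have "A $$ (r, c) * A $$ (r, c) \<le> (transpose_mat A * A) $$ (c, c)"
    unfolding gram_entry[OF A rc(2) rc(2)] by (rule member_le_sum) (use rc in auto)
  moreover have "A $$ (r, c) * A $$ (r, c) > 0"
    using rc(3) by (auto simp: zero_less_mult_iff linorder_neq_iff)
  ultimately show False by simp
qed

lemma dim_col_pos_if_nonzero:
  assumes "A \<in> carrier_mat p n" and "A \<noteq> 0\<^sub>m p n"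
  shows "n > 0"
  using assms by (metis carrier_matD(1,2) eq_matI index_zero_mat(1,2,3) less_nat_zero_code neq0_conv)

lemma tilde_mat_carrier: "A \<in> carrier_mat p n \<Longrightarrow> tilde_mat A \<in> carrier_mat (p + 1) n"
  unfolding tilde_mat_def by auto

lemma gram_tilde_mat_entry:
  fixes A :: "real mat"
  assumes A: "A \<in> carrier_mat p n" and "i < n" "j < n" and "beta_of A \<ge> 0"
  shows "(transpose_mat (tilde_mat A) * tilde_mat A) $$ (i, j)
     = beta_of A + (transpose_mat A * A) $$ (i, j)"
proof -
  have "(transpose_mat (tilde_mat A) * tilde_mat A) $$ (i, j)
     = (\<Sum>r=0..<Suc p. tilde_mat A $$ (r, i) * tilde_mat A $$ (r, j))"
    using gram_entry[OF tilde_mat_carrier[OF A]] assms by simp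
  also have "\<dots> = sqrt (beta_of A) * sqrt (beta_of A) + (\<Sum>r=0..<p. A $$ (r, i) * A $$ (r, j))"
    unfolding sum.atLeast0_lessThan_Suc_shift using assms
    by (auto simp: tilde_mat_def intro!: sum.cong)
  finally show ?thesis
    using assms gram_entry[OF A] by simp
qed

lemma gram_tilde_mat_row_sum:
  fixes A :: "real mat"
  assumes A: "A \<in> carrier_mat p n" and mean_removed: "A *\<^sub>v vec n (\<lambda>_. 1) = 0\<^sub>v p"
    and "beta_of A \<ge> 0" and i: "i < n"
  shows "(\<Sum>j=0..<n. (transpose_mat (tilde_mat A) * tilde_mat A) $$ (i, j)) = beta_of A * real n"
  using gram_row_sum_eq_0[OF A mean_removed i] assms
  by (simp add: gram_tilde_mat_entry sum.distrib)

lemma gram_tilde_mat_nonneg: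
  fixes A :: "real mat"
  assumes A: "A \<in> carrier_mat p n" and "beta_of A \<ge> 0" and "i < n" "j < n"
  shows "(transpose_mat (tilde_mat A) * tilde_mat A) $$ (i, j) \<ge> 0"
  using assms neg_beta_of_le_gram[of i A j] by (simp add: gram_tilde_mat_entry)

lemma largest_singular_value_sqrt:
  fixes M :: "real mat"
  assumes "eigenvalue (transpose_mat M * M) s" and "s \<ge> 0"
    and "\<And>l. eigenvalue (transpose_mat M * M) l \<Longrightarrow> l \<le> s"
  shows "largest_singular_value M (sqrt s)"
  using assms unfolding largest_singular_value_def singular_value_def
  by (auto simp: real_le_rsqrt)

lemma largest_singular_value_tilde_mat:
  fixes A :: "real mat"
  assumes A: "A \<in> carrier_mat p n" and mean_removed: "A *\<^sub>v vec n (\<lambda>_. 1) = 0\<^sub>v p"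
    and nonzero: "A \<noteq> 0\<^sub>m p n"
  shows "largest_singular_value (tilde_mat A) (sqrt (beta_of A * real n))"
proof (rule largest_singular_value_sqrt)
  let ?W = "transpose_mat (tilde_mat A) * tilde_mat A"
  have beta_pos: "beta_of A > 0"
    using beta_of_pos[OF A mean_removed nonzero] .
  have W: "?W \<in> carrier_mat n n"
    using tilde_mat_carrier[OF A] by simp
  note row_sum = gram_tilde_mat_row_sum[OF A mean_removed less_imp_le[OF beta_pos]]
  show "eigenvalue ?W (beta_of A * real n)"
    using row_sum_eigenvalue[OF W dim_col_pos_if_nonzero[OF A nonzero] row_sum] .
  show "beta_of A * real n \<ge> 0"
    using beta_pos by simp
  show "l \<le> beta_of A * real n" if "eigenvalue ?W l" for l
    using eigenvalue_le_row_sum[OF W gram_tilde_mat_nonneg[OF A less_imp_le[OF beta_pos]] row_sum that] .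
qed

lemma block_constant_in_right_singular_space:
  fixes A :: "real mat"
  assumes A: "A \<in> carrier_mat p n" and mean_removed: "A *\<^sub>v vec n (\<lambda>_. 1) = 0\<^sub>v p"
    and beta: "beta_of A \<ge> 0" and v: "v \<in> carrier_vec n"
    and blocks: "\<And>i j. i < n \<Longrightarrow> j < n \<Longrightarrow> v $ i \<noteq> v $ j \<Longrightarrow>
                   (transpose_mat (tilde_mat A) * tilde_mat A) $$ (i, j) = 0"
  shows "v \<in> right_singular_space (tilde_mat A) (sqrt (beta_of A * real n))"
proof -
  have W: "transpose_mat (tilde_mat A) * tilde_mat A \<in> carrier_mat n n"
    using tilde_mat_carrier[OF A] by simp
  show ?thesis
    using block_constant_mult_vec[OF W v gram_tilde_mat_row_sum[OF A mean_removed beta] blocks]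
      v beta tilde_mat_carrier[OF A]
    unfolding right_singular_space_def by simp
qed

theorem theorem1:
  fixes A F :: "real mat" and p n K :: nat
  assumes A_dim: "A \<in> carrier_mat p n"
    and mean_removed: "A *\<^sub>v vec n (\<lambda>_. 1) = 0\<^sub>v p"
    and A_nonzero: "A \<noteq> 0\<^sub>m p n"
    and F_dim: "F \<in> carrier_mat K n"
    and F_indicator: "\<forall>i<n. \<exists>k<K. col F i = unit_vec K k"
    and ideal: "\<forall>i<n. \<forall>j<n. col F i \<noteq> col F j \<longrightarrow>
                  (transpose_mat (tilde_mat A) * tilde_mat A) $$ (i, j) = 0"
  shows "largest_singular_value (tilde_mat A) (sqrt (beta_of A * real n))
       \<and> (\<forall>k<K. row F k \<in> right_singular_space (tilde_mat A) (sqrt (beta_of A * real n))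
                 \<and> row F k \<in> row_space (tilde_mat A))
       \<and> (\<forall>Ds \<in> carrier_mat K (p + 1).
            (\<forall>D \<in> carrier_mat K (p + 1). frob_sq (F - Ds * tilde_mat A) \<le> frob_sq (F - D * tilde_mat A))
            \<longrightarrow> F = Ds * tilde_mat A)"
proof -
  define T where "T = tilde_mat A"
  define s where "s = beta_of A * real n"
  have beta_pos: "beta_of A > 0"
    using beta_of_pos[OF A_dim mean_removed A_nonzero] .
  have s_pos: "s > 0"
    using beta_pos dim_col_pos_if_nonzero[OF A_dim A_nonzero] unfolding s_def by simp
  have T: "T \<in> carrier_mat (p + 1) n"
    unfolding T_def using tilde_mat_carrier[OF A_dim] .
  have singular: "row F k \<in> right_singular_space T (sqrt s)" if k: "k < K" for k
  proof (unfold T_def s_def, rule block_constant_in_right_singular_space[OF A_dim mean_removed])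
    show "row F k \<in> carrier_vec n" using row_carrier[of F k] F_dim by simp
    fix i j assume ij: "i < n" "j < n" and "row F k $ i \<noteq> row F k $ j"
    then have "col F i $ k \<noteq> col F j $ k" using F_dim k by simp
    then show "(transpose_mat (tilde_mat A) * tilde_mat A) $$ (i, j) = 0"
      using ideal ij by metis
  qed (use beta_pos in simp)
  have rows_F: "row F k \<in> row_space T" if "k < K" for k
    using singular[OF that] s_pos T gram_eigenvector_in_row_space[OF T, of "row F k" s]
    unfolding right_singular_space_def by auto
  show ?thesis
    using largest_singular_value_tilde_mat[OF A_dim mean_removed A_nonzero] singular rows_F
      least_squares_exact_fit[OF F_dim T factor_through_row_space[OF F_dim T rows_F]]
    unfolding T_def s_def by blast
qed

end
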